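(* Consider the two-unicast wireline network ("butterfly network 1") with nodes $\mathsf{S}_1,\mathsf{S}_2,\mathsf{M}_1,\mathsf{M}_2,\mathsf{D}_1,\mathsf{D}_2$ and seven directed edges: edge 1 from $\mathsf{S}_1$ to $\mathsf{M}_1$, edge 2 from $\mathsf{S}_2$ to $\mathsf{M}_1$, edge 3 from $\mathsf{M}_1$ to $\mathsf{M}_2$, edge 4 from $\mathsf{S}_1$ to $\mathsf{D}_2$, edge 5 from $\mathsf{S}_2$ to $\mathsf{D}_1$, edge 6 from $\mathsf{M}_2$ to $\mathsf{D}_2$, edge 7 from $\mathsf{M}_2$ to $\mathsf{D}_1$, with arbitrary capacities $\mathsf{C}_1,\dots,\mathsf{C}_7\ge 0$. Then secure communication is not possible: the only securely achievable rate pair is $(R_1,R_2)=(0,0)$.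
   Context: Network model: a directed acyclic graph; each edge $e$ is a noiseless orthogonal channel of capacity $\mathsf{C}_e$ carrying symbols over $\mathbb{F}_q$; over $n$ channel uses, edge $e$ carries $X_e^n$, received as $Y_e^n=X_e^n$. Source $\mathsf{S}_i$ has message $W_i$ (uniform, $q$-ary entropy $nR_i$, $W_1,W_2$ independent) to be decoded at $\mathsf{D}_i$, and an independent, unlimited private source of randomness $\Theta_i$. A rate pair is securely achievable if for some block length $n$ there are encoding functions—an edge leaving $\mathsf{S}_i$ carries a function of $(W_i,\Theta_i)$, any other edge a function of the symbols received on the incoming edges of its tail—and decoders at $\mathsf{D}_j$ (functions of the symbols on the incoming edges of $\mathsf{D}_j$) recovering $W_j$ with vanishing error probability, and moreover a passive eavesdropper wiretapping any single edge (which one is unknown) learns essentially nothing: for every edge $e$, $I(W_1,W_2;Z_e^n)<\epsilon_n$ with $\epsilon_n\to 0$, where $Z_e^n=X_e^n$ is the eavesdropper's observation on edge $e$ (strong secrecy). *)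

theory Defs
  imports "HOL-Probability.Probability" "HOL-Computational_Algebra.Primes"
begin

text \<open>Symbols of an edge over n channel uses are encoded as natural numbers; edge e carries
  a block of floor(n C_e) symbols of F_q, i.e. a value in {0..< q ^ floor(n C_e)}.\<close>

record bf_code =
  th1 :: "nat pmf"                   \<comment> \<open>distribution of private randomness of S1\<close>
  th2 :: "nat pmf"                   \<comment> \<open>distribution of private randomness of S2\<close>
  enc1 :: "nat \<Rightarrow> nat \<Rightarrow> nat"     \<comment> \<open>edge 1 from (W1, Theta1)\<close>
  enc4 :: "nat \<Rightarrow> nat \<Rightarrow> nat"     \<comment> \<open>edge 4 from (W1, Theta1)\<close>
  enc2 :: "nat \<Rightarrow> nat \<Rightarrow> nat"     \<comment> \<open>edge 2 from (W2, Theta2)\<close>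
  enc5 :: "nat \<Rightarrow> nat \<Rightarrow> nat"     \<comment> \<open>edge 5 from (W2, Theta2)\<close>
  enc3 :: "nat \<Rightarrow> nat \<Rightarrow> nat"     \<comment> \<open>edge 3 at M1 from (X1, X2)\<close>
  enc6 :: "nat \<Rightarrow> nat"            \<comment> \<open>edge 6 at M2 from X3\<close>
  enc7 :: "nat \<Rightarrow> nat"            \<comment> \<open>edge 7 at M2 from X3\<close>
  dec1 :: "nat \<Rightarrow> nat \<Rightarrow> nat"     \<comment> \<open>decoder at D1 from (X5, X7)\<close>
  dec2 :: "nat \<Rightarrow> nat \<Rightarrow> nat"     \<comment> \<open>decoder at D2 from (X4, X6)\<close>

definition prime_power :: "nat \<Rightarrow> bool" where
  "prime_power q \<longleftrightarrow> (\<exists>p k. prime p \<and> k > 0 \<and> q = p ^ k)"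

definition edge_len :: "(nat \<Rightarrow> real) \<Rightarrow> nat \<Rightarrow> nat \<Rightarrow> nat" where
  "edge_len C n e = nat \<lfloor>real n * C e\<rfloor>"

definition msg_size :: "nat \<Rightarrow> nat \<Rightarrow> real \<Rightarrow> nat" where
  "msg_size q n R = nat \<lceil>real q powr (real n * R)\<rceil>"

text \<open>Outcome \<omega> = (W1, W2, Theta1, Theta2); value carried on edge e.\<close>
fun bf_edge :: "bf_code \<Rightarrow> nat \<Rightarrow> nat \<times> nat \<times> nat \<times> nat \<Rightarrow> nat" where
  "bf_edge c e (w1, w2, t1, t2) =
     (let x1 = enc1 c w1 t1; x4 = enc4 c w1 t1;
          x2 = enc2 c w2 t2; x5 = enc5 c w2 t2;
          x3 = enc3 c x1 x2; x6 = enc6 c x3; x7 = enc7 c x3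
      in if e = 1 then x1 else if e = 2 then x2 else if e = 3 then x3
         else if e = 4 then x4 else if e = 5 then x5 else if e = 6 then x6 else x7)"

definition bf_valid :: "nat \<Rightarrow> (nat \<Rightarrow> real) \<Rightarrow> nat \<Rightarrow> bf_code \<Rightarrow> bool" where
  "bf_valid q C n c \<longleftrightarrow>
     (\<forall>w t. enc1 c w t < q ^ edge_len C n 1) \<and>
     (\<forall>w t. enc2 c w t < q ^ edge_len C n 2) \<and>
     (\<forall>a b. enc3 c a b < q ^ edge_len C n 3) \<and>
     (\<forall>w t. enc4 c w t < q ^ edge_len C n 4) \<and>
     (\<forall>w t. enc5 c w t < q ^ edge_len C n 5) \<and>
     (\<forall>a. enc6 c a < q ^ edge_len C n 6) \<and>
     (\<forall>a. enc7 c a < q ^ edge_len C n 7)"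

definition bf_space :: "nat \<Rightarrow> nat \<Rightarrow> real \<times> real \<Rightarrow> bf_code \<Rightarrow> (nat \<times> nat \<times> nat \<times> nat) pmf" where
  "bf_space q n R c =
     pair_pmf (pmf_of_set {..<msg_size q n (fst R)})
       (pair_pmf (pmf_of_set {..<msg_size q n (snd R)}) (pair_pmf (th1 c) (th2 c)))"

definition bf_error_prob :: "nat \<Rightarrow> nat \<Rightarrow> real \<times> real \<Rightarrow> bf_code \<Rightarrow> real" where
  "bf_error_prob q n R c =
     measure_pmf.prob (bf_space q n R c)
       {\<omega>. dec1 c (bf_edge c 5 \<omega>) (bf_edge c 7 \<omega>) \<noteq> fst \<omega> \<or>
           dec2 c (bf_edge c 4 \<omega>) (bf_edge c 6 \<omega>) \<noteq> fst (snd \<omega>)}"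

definition disc_mutual_info :: "real \<Rightarrow> 'w pmf \<Rightarrow> ('w \<Rightarrow> 'x) \<Rightarrow> ('w \<Rightarrow> 'y) \<Rightarrow> real" where
  "disc_mutual_info b P X Y =
     (\<Sum>(x, y) \<in> (\<lambda>\<omega>. (X \<omega>, Y \<omega>)) ` set_pmf P.
        let pxy = measure_pmf.prob P {\<omega>. X \<omega> = x \<and> Y \<omega> = y};
            px = measure_pmf.prob P {\<omega>. X \<omega> = x};
            py = measure_pmf.prob P {\<omega>. Y \<omega> = y}
        in pxy * log b (pxy / (px * py)))"

definition bf_leakage :: "nat \<Rightarrow> nat \<Rightarrow> real \<times> real \<Rightarrow> bf_code \<Rightarrow> nat \<Rightarrow> real" where
  "bf_leakage q n R c e =
     disc_mutual_info (real q) (bf_space q n R c) (\<lambda>\<omega>. (fst \<omega>, fst (snd \<omega>))) (bf_edge c e)"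

definition bf_securely_achievable :: "nat \<Rightarrow> (nat \<Rightarrow> real) \<Rightarrow> real \<times> real \<Rightarrow> bool" where
  "bf_securely_achievable q C R \<longleftrightarrow>
     fst R \<ge> 0 \<and> snd R \<ge> 0 \<and>
     (\<exists>code :: nat \<Rightarrow> bf_code.
        (\<forall>n. bf_valid q C n (code n)) \<and>
        (\<lambda>n. bf_error_prob q n R (code n)) \<longlonglongrightarrow> 0 \<and>
        (\<forall>e \<in> {1..7}. (\<lambda>n. bf_leakage q n R (code n) e) \<longlonglongrightarrow> 0))"

end

theory Submission
  imports Defs "HOL-Real_Asymp.Real_Asymp"
begin

(* D1 receives only edge 5, which depends on S2 alone, and edge 7, a function of edge 3 = f(X1, X2).
   With S2's message and randomness fixed, D1's estimate of W1 is therefore a function of the edge-1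
   symbol X1, and averaging over S2 yields one map h with P(h(X1) = W1) >= 1/2.  By the log-sum
   inequality such a guess forces I(W1, W2; X1) >= ln(M1/2)/2 - 1 nats, where M1 ~ q^(n R1) is the
   number of messages, so vanishing leakage on edge 1 forces R1 = 0.  Symmetrically D2 makes edge 2
   leak W2 unless R2 = 0, and the rate pair (0, 0) is achieved by the code that sends nothing. *)

lemma mult_ln_div_ge_diff:
  fixes a b :: real
  assumes "0 < a" "0 < b"
  shows "a - b \<le> a * ln (a / b)"
proof -
  have "a * ln (b / a) \<le> a * (b / a - 1)"
    using assms by (intro mult_left_mono ln_le_minus_one) auto
  moreover have "ln (b / a) = - ln (a / b)" "a * (b / a - 1) = b - a"
    using assms by (simp_all add: ln_div field_simps)
  ultimately show ?thesis by simp
qed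

lemma log_sum_inequality:
  fixes a b :: "'i \<Rightarrow> real"
  assumes "finite S" "S \<noteq> {}" "\<And>i. i \<in> S \<Longrightarrow> 0 < a i" "\<And>i. i \<in> S \<Longrightarrow> 0 < b i"
  shows "(\<Sum>i\<in>S. a i) * ln ((\<Sum>i\<in>S. a i) / (\<Sum>i\<in>S. b i)) \<le> (\<Sum>i\<in>S. a i * ln (a i / b i))"
proof -
  define A B where "A = (\<Sum>i\<in>S. a i)" and "B = (\<Sum>i\<in>S. b i)"
  have "0 < A" "0 < B" unfolding A_def B_def using assms by (auto intro: sum_pos)
  \<comment> \<open>compare a with the rescaled weights b * A / B, which have the same total mass A\<close>
  have "a i - b i * A / B \<le> a i * ln (a i / b i) - a i * ln (A / B)" if "i \<in> S" for i
  proof -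
    have "a i * ln (a i / (b i * A / B)) = a i * ln (a i / b i) - a i * ln (A / B)"
      using assms(3,4)[OF that] \<open>0 < A\<close> \<open>0 < B\<close> by (simp add: ln_div ln_mult algebra_simps)
    with mult_ln_div_ge_diff[of "a i" "b i * A / B"] show ?thesis
      using assms(3,4)[OF that] \<open>0 < A\<close> \<open>0 < B\<close> by simp
  qed
  then have "(\<Sum>i\<in>S. a i - b i * A / B) \<le> (\<Sum>i\<in>S. a i * ln (a i / b i) - a i * ln (A / B))"
    by (rule sum_mono)
  moreover have "(\<Sum>i\<in>S. a i - b i * A / B) = 0"
    using \<open>0 < B\<close> by (simp add: sum_subtractf sum_divide_distrib[symmetric]
        sum_distrib_right[symmetric] A_def[symmetric] B_def[symmetric])
  ultimately show ?thesis
    by (simp add: sum_subtractf sum_distrib_right[symmetric] A_def[symmetric] B_def[symmetric])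
qed

lemma divergence_ge_of_separating_set:
  fixes a b :: "'i \<Rightarrow> real" and M :: real
  assumes "finite T" "S \<subseteq> T" "\<And>i. i \<in> T \<Longrightarrow> 0 < a i" "\<And>i. i \<in> T \<Longrightarrow> 0 < b i"
    and "(\<Sum>i\<in>T - S. b i) \<le> 1" "(\<Sum>i\<in>S. b i) \<le> 1 / M" "1 / 2 \<le> (\<Sum>i\<in>S. a i)" "2 \<le> M"
  shows "ln (M / 2) / 2 - 1 \<le> (\<Sum>i\<in>T. a i * ln (a i / b i))"
proof -
  define A B where "A = (\<Sum>i\<in>S. a i)" and "B = (\<Sum>i\<in>S. b i)"
  have "finite S" using assms(1,2) by (rule finite_subset[rotated])
  moreover have "S \<noteq> {}" using assms(7) by auto
  ultimately have "0 < B" unfolding B_def using assms(2,4) by (meson sum_pos subsetD)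
  have "(\<Sum>i\<in>T - S. a i - b i) \<le> (\<Sum>i\<in>T - S. a i * ln (a i / b i))"
    using assms(3,4) by (intro sum_mono mult_ln_div_ge_diff) auto
  moreover have "- (\<Sum>i\<in>T - S. b i) \<le> (\<Sum>i\<in>T - S. a i - b i)"
    using assms(3) by (simp add: sum_subtractf) (meson DiffD1 less_imp_le sum_nonneg)
  ultimately have rest: "-1 \<le> (\<Sum>i\<in>T - S. a i * ln (a i / b i))"
    using assms(5) by linarith
  have "M / 2 \<le> A * M" using assms(7,8) by (simp add: A_def)
  also have "A * M \<le> A / B"
    using assms(6-8) \<open>0 < B\<close> by (simp add: A_def[symmetric] B_def[symmetric] field_simps)
  finally have "ln (M / 2) \<le> ln (A / B)" using assms(8) by (intro ln_mono) auto
  then have "ln (M / 2) / 2 \<le> A * ln (A / B)"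
    using assms(7,8) mult_mono[of "1/2" A "ln (M / 2)" "ln (A / B)"] by (simp add: A_def)
  also have "A * ln (A / B) \<le> (\<Sum>i\<in>S. a i * ln (a i / b i))"
    unfolding A_def B_def using \<open>finite S\<close> \<open>S \<noteq> {}\<close> assms(2-4) by (intro log_sum_inequality) auto
  finally show ?thesis
    using rest sum.subset_diff[OF assms(2,1), of "\<lambda>i. a i * ln (a i / b i)"] by linarith
qed

lemma measure_pair_pmf_le_of_sections:
  assumes "\<And>b. b \<in> set_pmf B \<Longrightarrow> measure_pmf.prob A {a. (b, a) \<in> E} \<le> c" "0 \<le> c"
  shows "measure_pmf.prob (pair_pmf B A) E \<le> c"
proof -
  have "emeasure (pair_pmf B A) E = (\<integral>\<^sup>+x. indicator E x \<partial>pair_pmf B A)"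
    by simp
  also have "\<dots> = (\<integral>\<^sup>+b. \<integral>\<^sup>+a. indicator {a. (b, a) \<in> E} a \<partial>A \<partial>B)"
    unfolding nn_integral_pair_pmf' by (simp add: indicator_def)
  also have "\<dots> = (\<integral>\<^sup>+b. emeasure A {a. (b, a) \<in> E} \<partial>B)"
    by simp
  also have "\<dots> \<le> (\<integral>\<^sup>+b. ennreal c \<partial>B)"
    using assms(1) by (intro nn_integral_mono_AE AE_pmfI)
      (simp add: measure_pmf.emeasure_eq_measure ennreal_leI)
  also have "\<dots> = ennreal c" by (simp add: measure_pmf.emeasure_space_1)
  finally show ?thesis using assms(2) by (simp add: measure_pmf.emeasure_eq_measure)
qed

lemma ex_guess_of_pair_pmf:
  assumes "\<And>b. b \<in> set_pmf B \<Longrightarrow> \<exists>h. \<forall>a. (b, a) \<in> E \<longrightarrow> h (X a) = W a"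
    and "c < measure_pmf.prob (pair_pmf B A) E"
  shows "\<exists>h. c < measure_pmf.prob A {a. h (X a) = W a}"
proof (rule ccontr)
  assume "\<nexists>h. c < measure_pmf.prob A {a. h (X a) = W a}"
  then have guess: "measure_pmf.prob A {a. h (X a) = W a} \<le> c" for h
    by (simp add: not_less)
  have "measure_pmf.prob A {a. (b, a) \<in> E} \<le> c" if b: "b \<in> set_pmf B" for b
  proof -
    obtain h where "\<forall>a. (b, a) \<in> E \<longrightarrow> h (X a) = W a" using assms(1)[OF b] by blast
    then have "measure_pmf.prob A {a. (b, a) \<in> E} \<le> measure_pmf.prob A {a. h (X a) = W a}"
      by (intro measure_pmf.finite_measure_mono) auto
    with guess[of h] show ?thesis by linarith
  qed
  moreover have "0 \<le> c" using guess[of undefined] by (rule order_trans[rotated]) simp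
  ultimately have "measure_pmf.prob (pair_pmf B A) E \<le> c"
    by (rule measure_pair_pmf_le_of_sections)
  with assms(2) show False by simp
qed

lemma disc_mutual_info_conv_sum:
  fixes P :: "'w pmf" and X :: "'w \<Rightarrow> 'x" and Y :: "'w \<Rightarrow> 'y"
  defines "Z \<equiv> map_pmf (\<lambda>\<omega>. (X \<omega>, Y \<omega>)) P"
  assumes "1 < b"
  shows "disc_mutual_info b P X Y * ln b =
    (\<Sum>p\<in>set_pmf Z. pmf Z p * ln (pmf Z p / pmf (pair_pmf (map_pmf X P) (map_pmf Y P)) p))"
proof -
  have "disc_mutual_info b P X Y =
      (\<Sum>p\<in>set_pmf Z. pmf Z p * log b (pmf Z p / pmf (pair_pmf (map_pmf X P) (map_pmf Y P)) p))"
    unfolding disc_mutual_info_def Z_def set_map_pmf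
    by (intro sum.cong refl) (auto simp: pmf_map pmf_pair Let_def vimage_def)
  with assms(2) show ?thesis by (simp add: log_def sum_distrib_right)
qed

lemma disc_mutual_info_ge_of_guess:
  fixes P :: "'w pmf" and X :: "'w \<Rightarrow> 'x" and Y :: "'w \<Rightarrow> 'y" and g :: "'x \<Rightarrow> 'v" and M :: real
  assumes "finite (X ` set_pmf P)" "finite (Y ` set_pmf P)" "1 < b" "2 \<le> M"
    and marginal: "\<And>v. measure_pmf.prob P {\<omega>. g (X \<omega>) = v} \<le> 1 / M"
    and guess: "1 / 2 \<le> measure_pmf.prob P {\<omega>. h (Y \<omega>) = g (X \<omega>)}"
  shows "ln (M / 2) / 2 - 1 \<le> disc_mutual_info b P X Y * ln b"
proof -
  define Z where "Z = map_pmf (\<lambda>\<omega>. (X \<omega>, Y \<omega>)) P"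
  define Q where "Q = pair_pmf (map_pmf X P) (map_pmf Y P)"
  define S where "S = {p \<in> set_pmf Z. h (snd p) = g (fst p)}"
  have support: "set_pmf Z \<subseteq> set_pmf Q" by (auto simp: Z_def Q_def)
  moreover have "set_pmf Q \<subseteq> X ` set_pmf P \<times> Y ` set_pmf P" by (simp add: Q_def)
  ultimately have "finite (set_pmf Z)" using assms(1,2) by (meson finite_SigmaI finite_subset)
  then have "finite S" by (simp add: S_def)
  have "(\<Sum>p\<in>S. pmf Q p) \<le> measure_pmf.prob Q {p. h (snd p) = g (fst p)}"
    using \<open>finite S\<close> by (auto simp: measure_measure_pmf_finite[symmetric] S_def
        intro: measure_pmf.finite_measure_mono)
  also have "\<dots> = measure_pmf.prob (pair_pmf (map_pmf Y P) (map_pmf X P)) {(y, x). g x = h y}"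
    by (subst Q_def, subst pair_commute_pmf) (auto intro: arg_cong[where f = "measure_pmf.prob _"])
  also have "\<dots> \<le> 1 / M"
    using marginal assms(4) by (intro measure_pair_pmf_le_of_sections) (auto simp: vimage_def)
  finally have "(\<Sum>p\<in>S. pmf Q p) \<le> 1 / M" .
  moreover have "(\<Sum>p\<in>set_pmf Z - S. pmf Q p) \<le> 1"
    using \<open>finite (set_pmf Z)\<close> by (simp add: measure_measure_pmf_finite[symmetric])
  moreover have "1 / 2 \<le> (\<Sum>p\<in>S. pmf Z p)"
  proof -
    have "S = {p. h (snd p) = g (fst p)} \<inter> set_pmf Z" by (auto simp: S_def)
    then have "(\<Sum>p\<in>S. pmf Z p) = measure_pmf.prob Z {p. h (snd p) = g (fst p)}"
      using \<open>finite S\<close> by (simp add: measure_measure_pmf_finite[symmetric] measure_Int_set_pmf)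
    with guess show ?thesis by (simp add: Z_def vimage_def)
  qed
  ultimately have "ln (M / 2) / 2 - 1 \<le> (\<Sum>p\<in>set_pmf Z. pmf Z p * ln (pmf Z p / pmf Q p))"
    using \<open>finite (set_pmf Z)\<close> support assms(4)
    by (intro divergence_ge_of_separating_set) (auto simp: S_def pmf_positive)
  with disc_mutual_info_conv_sum[OF assms(3), of P X Y] show ?thesis
    unfolding Z_def Q_def by linarith
qed

definition bf_source1 :: "nat \<Rightarrow> nat \<Rightarrow> real \<times> real \<Rightarrow> bf_code \<Rightarrow> (nat \<times> nat) pmf" where
  "bf_source1 q n R c = pair_pmf (pmf_of_set {..<msg_size q n (fst R)}) (th1 c)"

definition bf_source2 :: "nat \<Rightarrow> nat \<Rightarrow> real \<times> real \<Rightarrow> bf_code \<Rightarrow> (nat \<times> nat) pmf" where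
  "bf_source2 q n R c = pair_pmf (pmf_of_set {..<msg_size q n (snd R)}) (th2 c)"

lemma msg_size_pos: "1 \<le> q \<Longrightarrow> 0 < msg_size q n R"
  unfolding msg_size_def by simp

lemma msg_size_at_top:
  assumes "2 \<le> q" "0 < R"
  shows "filterlim (\<lambda>n. real (msg_size q n R)) at_top sequentially"
proof (rule filterlim_at_top_mono)
  show "filterlim (\<lambda>n. real q powr (real n * R)) at_top sequentially"
    using assms by real_asymp
  show "\<forall>\<^sub>F n in sequentially. real q powr (real n * R) \<le> real (msg_size q n R)"
    by (simp add: msg_size_def real_nat_ceiling_ge)
qed

lemma bf_space_eq_map_sources:
  "bf_space q n R c = map_pmf (\<lambda>((w1, t1), (w2, t2)). (w1, w2, t1, t2))
     (pair_pmf (bf_source1 q n R c) (bf_source2 q n R c))"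
  (is "_ = map_pmf ?r ?Q")
proof (rule pmf_eqI)
  fix \<omega> :: "nat \<times> nat \<times> nat \<times> nat"
  obtain w1 w2 t1 t2 where \<omega>: "\<omega> = ?r ((w1, t1), (w2, t2))" by (cases \<omega>) auto
  have "inj ?r" by (auto simp: inj_on_def)
  then show "pmf (bf_space q n R c) \<omega> = pmf (map_pmf ?r ?Q) \<omega>"
    unfolding \<omega> pmf_map_inj'[OF \<open>inj ?r\<close>]
    by (simp add: bf_space_def bf_source1_def bf_source2_def pmf_pair)
qed

lemma bf_space_eq_map_sources':
  "bf_space q n R c = map_pmf (\<lambda>((w2, t2), (w1, t1)). (w1, w2, t1, t2))
     (pair_pmf (bf_source2 q n R c) (bf_source1 q n R c))"
  by (subst bf_space_eq_map_sources, subst pair_commute_pmf)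
    (auto simp: map_pmf_comp intro: map_pmf_cong)

lemma finite_bf_space_messages:
  assumes "1 \<le> q"
  shows "finite ((\<lambda>\<omega>. (fst \<omega>, fst (snd \<omega>))) ` set_pmf (bf_space q n R c))"
proof (rule finite_subset)
  show "(\<lambda>\<omega>. (fst \<omega>, fst (snd \<omega>))) ` set_pmf (bf_space q n R c)
      \<subseteq> {..<msg_size q n (fst R)} \<times> {..<msg_size q n (snd R)}"
    using msg_size_pos[OF assms, of n "fst R"] msg_size_pos[OF assms, of n "snd R"]
    by (auto simp: bf_space_def lessThan_empty_iff)
qed simp

lemma prob_bf_message1_le:
  assumes "1 \<le> q"
  shows "measure_pmf.prob (bf_space q n R c) {\<omega>. fst \<omega> = v} \<le> 1 / msg_size q n (fst R)"
proof -
  have "measure_pmf.prob (bf_space q n R c) {\<omega>. fst \<omega> = v}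
      = measure_pmf.prob (map_pmf fst (bf_space q n R c)) {v}"
    by (simp add: vimage_def)
  also have "\<dots> = pmf (pmf_of_set {..<msg_size q n (fst R)}) v"
    by (simp add: bf_space_def map_fst_pair_pmf measure_pmf_single)
  finally show ?thesis
    using msg_size_pos[OF assms] by (simp add: lessThan_empty_iff indicator_def)
qed

lemma prob_bf_message2_le:
  assumes "1 \<le> q"
  shows "measure_pmf.prob (bf_space q n R c) {\<omega>. fst (snd \<omega>) = v} \<le> 1 / msg_size q n (snd R)"
proof -
  have "measure_pmf.prob (bf_space q n R c) {\<omega>. fst (snd \<omega>) = v}
      = measure_pmf.prob (map_pmf fst (map_pmf snd (bf_space q n R c))) {v}"
    by (simp add: vimage_def)
  also have "\<dots> = pmf (pmf_of_set {..<msg_size q n (snd R)}) v"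
    by (simp add: bf_space_def map_fst_pair_pmf map_snd_pair_pmf measure_pmf_single)
  finally show ?thesis
    using msg_size_pos[OF assms] by (simp add: lessThan_empty_iff indicator_def)
qed

lemma bf_decoding_prob_ge:
  "1 - bf_error_prob q n R c
     \<le> measure_pmf.prob (bf_space q n R c) {\<omega>. dec1 c (bf_edge c 5 \<omega>) (bf_edge c 7 \<omega>) = fst \<omega>}"
  "1 - bf_error_prob q n R c
     \<le> measure_pmf.prob (bf_space q n R c) {\<omega>. dec2 c (bf_edge c 4 \<omega>) (bf_edge c 6 \<omega>) = fst (snd \<omega>)}"
  unfolding bf_error_prob_def
  by (auto simp: measure_pmf.prob_compl[symmetric] intro!: measure_pmf.finite_measure_mono)

lemma bf_ex_decoder_from_edge1:
  assumes "bf_error_prob q n R c < 1 / 2"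
  shows "\<exists>h. 1 / 2 < measure_pmf.prob (bf_space q n R c) {\<omega>. h (bf_edge c 1 \<omega>) = fst \<omega>}"
proof -
  define r :: "(nat \<times> nat) \<times> nat \<times> nat \<Rightarrow> nat \<times> nat \<times> nat \<times> nat"
    where "r = (\<lambda>((w2, t2), (w1, t1)). (w1, w2, t1, t2))"
  define Q where "Q = pair_pmf (bf_source2 q n R c) (bf_source1 q n R c)"
  have space: "bf_space q n R c = map_pmf r Q"
    unfolding r_def Q_def by (rule bf_space_eq_map_sources')
  let ?D1 = "{\<omega>. dec1 c (bf_edge c 5 \<omega>) (bf_edge c 7 \<omega>) = fst \<omega>}"
  have "1 / 2 < measure_pmf.prob Q (r -` ?D1)"
    using bf_decoding_prob_ge(1)[of q n R c] assms by (simp add: space)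
  \<comment> \<open>once S2's message and randomness are fixed, D1 sees W1 only through edge 1\<close>
  moreover have "\<exists>h. \<forall>a. (b, a) \<in> r -` ?D1 \<longrightarrow> h (case_prod (enc1 c) a) = fst a" for b
  proof (cases b)
    case (Pair w2 t2)
    show ?thesis
      by (rule exI[of _ "\<lambda>x. dec1 c (enc5 c w2 t2) (enc7 c (enc3 c x (enc2 c w2 t2)))"])
        (auto simp: Pair r_def Let_def)
  qed
  ultimately obtain h
    where "1 / 2 < measure_pmf.prob (bf_source1 q n R c) {a. h (case_prod (enc1 c) a) = fst a}"
    using ex_guess_of_pair_pmf[of "bf_source2 q n R c"] unfolding Q_def by blast
  also have "\<dots> = measure_pmf.prob Q (snd -` {a. h (case_prod (enc1 c) a) = fst a})"
    unfolding Q_def by (metis measure_map_pmf map_snd_pair_pmf)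
  also have "snd -` {a. h (case_prod (enc1 c) a) = fst a} = r -` {\<omega>. h (bf_edge c 1 \<omega>) = fst \<omega>}"
    by (auto simp: r_def Let_def)
  finally show ?thesis by (auto simp: space)
qed

lemma bf_ex_decoder_from_edge2:
  assumes "bf_error_prob q n R c < 1 / 2"
  shows "\<exists>h. 1 / 2 < measure_pmf.prob (bf_space q n R c) {\<omega>. h (bf_edge c 2 \<omega>) = fst (snd \<omega>)}"
proof -
  define r :: "(nat \<times> nat) \<times> nat \<times> nat \<Rightarrow> nat \<times> nat \<times> nat \<times> nat"
    where "r = (\<lambda>((w1, t1), (w2, t2)). (w1, w2, t1, t2))"
  define Q where "Q = pair_pmf (bf_source1 q n R c) (bf_source2 q n R c)"
  have space: "bf_space q n R c = map_pmf r Q"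
    unfolding r_def Q_def by (rule bf_space_eq_map_sources)
  let ?D2 = "{\<omega>. dec2 c (bf_edge c 4 \<omega>) (bf_edge c 6 \<omega>) = fst (snd \<omega>)}"
  have "1 / 2 < measure_pmf.prob Q (r -` ?D2)"
    using bf_decoding_prob_ge(2)[of q n R c] assms by (simp add: space)
  moreover have "\<exists>h. \<forall>a. (b, a) \<in> r -` ?D2 \<longrightarrow> h (case_prod (enc2 c) a) = fst a" for b
  proof (cases b)
    case (Pair w1 t1)
    show ?thesis
      by (rule exI[of _ "\<lambda>x. dec2 c (enc4 c w1 t1) (enc6 c (enc3 c (enc1 c w1 t1) x))"])
        (auto simp: Pair r_def Let_def)
  qed
  ultimately obtain h
    where "1 / 2 < measure_pmf.prob (bf_source2 q n R c) {a. h (case_prod (enc2 c) a) = fst a}"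
    using ex_guess_of_pair_pmf[of "bf_source1 q n R c"] unfolding Q_def by blast
  also have "\<dots> = measure_pmf.prob Q (snd -` {a. h (case_prod (enc2 c) a) = fst a})"
    unfolding Q_def by (metis measure_map_pmf map_snd_pair_pmf)
  also have "snd -` {a. h (case_prod (enc2 c) a) = fst a} = r -` {\<omega>. h (bf_edge c 2 \<omega>) = fst (snd \<omega>)}"
    by (auto simp: r_def Let_def)
  finally show ?thesis by (auto simp: space)
qed


lemma bf_leakage_edge1_ge:
  assumes "2 \<le> q" "bf_valid q C n c" "bf_error_prob q n R c < 1 / 2"
    and "2 \<le> real (msg_size q n (fst R))"
  shows "ln (real (msg_size q n (fst R)) / 2) / 2 - 1 \<le> bf_leakage q n R c 1 * ln q"
proof -
  obtain h where "1 / 2 < measure_pmf.prob (bf_space q n R c) {\<omega>. h (bf_edge c 1 \<omega>) = fst \<omega>}"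
    using bf_ex_decoder_from_edge1[OF assms(3)] by blast
  show ?thesis
    unfolding bf_leakage_def
  proof (rule disc_mutual_info_ge_of_guess[where g = fst and h = h])
    show "1 / 2 \<le> measure_pmf.prob (bf_space q n R c)
        {\<omega>. h (bf_edge c 1 \<omega>) = fst (fst \<omega>, fst (snd \<omega>))}"
      using \<open>1 / 2 < _\<close> by simp
    show "measure_pmf.prob (bf_space q n R c) {\<omega>. fst (fst \<omega>, fst (snd \<omega>)) = v}
        \<le> 1 / real (msg_size q n (fst R))" for v
      using prob_bf_message1_le[of q n R c v] assms(1) by simp
    show "finite ((\<lambda>\<omega>. (fst \<omega>, fst (snd \<omega>))) ` set_pmf (bf_space q n R c))"
      using assms(1) by (intro finite_bf_space_messages) simp
    show "finite (bf_edge c 1 ` set_pmf (bf_space q n R c))"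
      using assms(2) by (intro finite_subset[OF _ finite_lessThan[of "q ^ edge_len C n 1"]])
        (auto simp: bf_valid_def Let_def)
  qed (use assms(1,4) in auto)
qed

lemma bf_leakage_edge2_ge:
  assumes "2 \<le> q" "bf_valid q C n c" "bf_error_prob q n R c < 1 / 2"
    and "2 \<le> real (msg_size q n (snd R))"
  shows "ln (real (msg_size q n (snd R)) / 2) / 2 - 1 \<le> bf_leakage q n R c 2 * ln q"
proof -
  obtain h where "1 / 2 < measure_pmf.prob (bf_space q n R c) {\<omega>. h (bf_edge c 2 \<omega>) = fst (snd \<omega>)}"
    using bf_ex_decoder_from_edge2[OF assms(3)] by blast
  show ?thesis
    unfolding bf_leakage_def
  proof (rule disc_mutual_info_ge_of_guess[where g = snd and h = h])
    show "1 / 2 \<le> measure_pmf.prob (bf_space q n R c)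
        {\<omega>. h (bf_edge c 2 \<omega>) = snd (fst \<omega>, fst (snd \<omega>))}"
      using \<open>1 / 2 < _\<close> by simp
    show "measure_pmf.prob (bf_space q n R c) {\<omega>. snd (fst \<omega>, fst (snd \<omega>)) = v}
        \<le> 1 / real (msg_size q n (snd R))" for v
      using prob_bf_message2_le[of q n R c v] assms(1) by simp
    show "finite ((\<lambda>\<omega>. (fst \<omega>, fst (snd \<omega>))) ` set_pmf (bf_space q n R c))"
      using assms(1) by (intro finite_bf_space_messages) simp
    show "finite (bf_edge c 2 ` set_pmf (bf_space q n R c))"
      using assms(2) by (intro finite_subset[OF _ finite_lessThan[of "q ^ edge_len C n 2"]])
        (auto simp: bf_valid_def Let_def)
  qed (use assms(1,4) in auto)
qed

lemma rate_eq_zero_of_leakage_ge: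
  fixes err L :: "nat \<Rightarrow> real"
  assumes "2 \<le> q" "0 \<le> R" "err \<longlonglongrightarrow> 0" "L \<longlonglongrightarrow> 0"
    and leakage_ge: "\<And>n. err n < 1 / 2 \<Longrightarrow> 2 \<le> real (msg_size q n R) \<Longrightarrow>
      ln (real (msg_size q n R) / 2) / 2 - 1 \<le> L n * ln q"
  shows "R = 0"
proof (rule ccontr)
  assume "R \<noteq> 0"
  with assms(2) have "0 < R" by simp
  have "\<forall>\<^sub>F n in sequentially. 2 * exp 4 \<le> real (msg_size q n R)"
    using msg_size_at_top[OF assms(1) \<open>0 < R\<close>] by (simp add: filterlim_at_top)
  moreover have "\<forall>\<^sub>F n in sequentially. err n < 1 / 2"
    using assms(3) by (rule order_tendstoD) simp
  moreover have "\<forall>\<^sub>F n in sequentially. L n * ln q < 1"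
    using tendsto_mult_left_zero[OF assms(4), of "ln q"] by (rule order_tendstoD) simp
  ultimately have "\<forall>\<^sub>F n in sequentially. False"
  proof eventually_elim
    case (elim n)
    have "2 \<le> 2 * exp (4 :: real)" by simp
    with elim(1) have "2 \<le> real (msg_size q n R)" by linarith
    have "ln (2 * exp 4 / 2) \<le> ln (real (msg_size q n R) / 2)"
      using elim(1) by (intro ln_mono) auto
    with leakage_ge[OF elim(2) \<open>2 \<le> real (msg_size q n R)\<close>] elim(3) show False by simp
  qed
  then show False by simp
qed

lemma bf_securely_achievable_zero:
  assumes "1 \<le> q"
  shows "bf_securely_achievable q C (0, 0)"
proof -
  define silent where "silent = \<lparr>th1 = return_pmf 0, th2 = return_pmf 0,
    enc1 = \<lambda>_ _. 0, enc4 = \<lambda>_ _. 0, enc2 = \<lambda>_ _. 0, enc5 = \<lambda>_ _. 0,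
    enc3 = \<lambda>_ _. 0, enc6 = \<lambda>_. 0, enc7 = \<lambda>_. 0, dec1 = \<lambda>_ _. 0, dec2 = \<lambda>_ _. 0\<rparr>"
  have "msg_size q n 0 = 1" for n using assms by (simp add: msg_size_def)
  then have space: "bf_space q n (0, 0) silent = return_pmf (0, 0, 0, 0)" for n
    by (simp add: bf_space_def silent_def lessThan_Suc pmf_of_set_singleton)
  have "bf_valid q C n silent" for n using assms by (simp add: bf_valid_def silent_def)
  moreover have "bf_error_prob q n (0, 0) silent = 0" for n
    unfolding bf_error_prob_def space by (simp add: silent_def)
  moreover have "bf_leakage q n (0, 0) silent e = 0" for n e
    by (simp add: bf_leakage_def space disc_mutual_info_def)
  ultimately show ?thesis
    unfolding bf_securely_achievable_def by (intro conjI exI[of _ "\<lambda>_. silent"]) simp_all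
qed

lemma bf_securely_achievable_imp_zero:
  assumes "2 \<le> q" "bf_securely_achievable q C (R1, R2)"
  shows "R1 = 0 \<and> R2 = 0"
proof -
  obtain code where "0 \<le> R1" "0 \<le> R2" and valid: "\<And>n. bf_valid q C n (code n)"
    and err: "(\<lambda>n. bf_error_prob q n (R1, R2) (code n)) \<longlonglongrightarrow> 0"
    and leak: "\<forall>e \<in> {1..7}. (\<lambda>n. bf_leakage q n (R1, R2) (code n) e) \<longlonglongrightarrow> 0"
    using assms(2) unfolding bf_securely_achievable_def fst_conv snd_conv by blast
  have "R1 = 0"
  proof (rule rate_eq_zero_of_leakage_ge[OF assms(1) \<open>0 \<le> R1\<close> err])
    show "(\<lambda>n. bf_leakage q n (R1, R2) (code n) 1) \<longlonglongrightarrow> 0" using leak by simp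
    show "ln (real (msg_size q n R1) / 2) / 2 - 1 \<le> bf_leakage q n (R1, R2) (code n) 1 * ln q"
      if "bf_error_prob q n (R1, R2) (code n) < 1 / 2" "2 \<le> real (msg_size q n R1)" for n
      using bf_leakage_edge1_ge[OF assms(1) valid that(1)] that(2) by simp
  qed
  moreover have "R2 = 0"
  proof (rule rate_eq_zero_of_leakage_ge[OF assms(1) \<open>0 \<le> R2\<close> err])
    show "(\<lambda>n. bf_leakage q n (R1, R2) (code n) 2) \<longlonglongrightarrow> 0" using leak by simp
    show "ln (real (msg_size q n R2) / 2) / 2 - 1 \<le> bf_leakage q n (R1, R2) (code n) 2 * ln q"
      if "bf_error_prob q n (R1, R2) (code n) < 1 / 2" "2 \<le> real (msg_size q n R2)" for n
      using bf_leakage_edge2_ge[OF assms(1) valid that(1)] that(2) by simp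
  qed
  ultimately show ?thesis ..
qed

lemma prime_power_ge_2:
  assumes "prime_power q"
  shows "2 \<le> q"
proof -
  obtain p k where "prime p" "0 < k" "q = p ^ k" using assms by (auto simp: prime_power_def)
  moreover have "p \<le> p ^ k" using calculation prime_ge_2_nat[of p] by (intro self_le_power) auto
  ultimately show ?thesis using prime_ge_2_nat[of p] by simp
qed

theorem theorem2:
  fixes q :: nat and C :: "nat \<Rightarrow> real" and R1 R2 :: real
  assumes "prime_power q"
    and "\<forall>e \<in> {1..7}. C e \<ge> 0"
  shows "bf_securely_achievable q C (R1, R2) \<longleftrightarrow> R1 = 0 \<and> R2 = 0"
proof
  have "2 \<le> q" using assms(1) by (rule prime_power_ge_2)
  then show "bf_securely_achievable q C (R1, R2) \<Longrightarrow> R1 = 0 \<and> R2 = 0"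
    by (rule bf_securely_achievable_imp_zero)
  show "R1 = 0 \<and> R2 = 0 \<Longrightarrow> bf_securely_achievable q C (R1, R2)"
    using bf_securely_achievable_zero \<open>2 \<le> q\<close> by simp
qed

end
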